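(* For a finite group $G$, the following conditions are equivalent: (a) $P(G)$ is a threshold graph; (b) $P(G)$ is a split graph; (c) $P(G)$ contains no induced subgraph isomorphic to $2K_2$; (d) $G$ satisfies the intersection condition, i.e. $G$ does not contain subgroups $H$ and $K$ such that both $H\setminus K$ and $K\setminus H$ contain elements of order greater than $2$; (e) $G$ is one of: a cyclic group of prime power order (including the trivial group); an elementary abelian $2$-group; a dihedral $2$-group; a cyclic group of order $2p$; a dihedral group of order $2p^n$ ($n\ge1$); or a dihedral group of order $4p$; where $p$ is an odd prime.
   Context: The power graph $P(G)$ has vertex set $G$, with distinct $u,v$ adjacent if and only if $u=v^i$ or $v=u^j$ for some integers $i,j$. A threshold graph is a graph with no induced subgraph isomorphic to $P_4$ (path on four vertices), $C_4$ ($4$-cycle) or $2K_2$ (two disjoint edges with no other edges between them). A split graph is a graph whose vertex set is a disjoint union of a set inducing a complete graph and a set inducing a graph with no edges. The dihedral group of order $2m$ is $\langle a,b: a^m=b^2=(ab)^2=1\rangle$. *)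

theory Defs
  imports "HOL-Algebra.Algebra" "HOL-Algebra.Elementary_Groups" "HOL-Algebra.Multiplicative_Group"
begin

definition has_induced_P4 :: "'v set \<Rightarrow> ('v \<Rightarrow> 'v \<Rightarrow> bool) \<Rightarrow> bool" where
  "has_induced_P4 V E \<longleftrightarrow> (\<exists>a\<in>V. \<exists>b\<in>V. \<exists>c\<in>V. \<exists>d\<in>V. distinct [a,b,c,d] \<and>
      E a b \<and> E b c \<and> E c d \<and> \<not> E a c \<and> \<not> E a d \<and> \<not> E b d)"

definition has_induced_C4 :: "'v set \<Rightarrow> ('v \<Rightarrow> 'v \<Rightarrow> bool) \<Rightarrow> bool" where
  "has_induced_C4 V E \<longleftrightarrow> (\<exists>a\<in>V. \<exists>b\<in>V. \<exists>c\<in>V. \<exists>d\<in>V. distinct [a,b,c,d] \<and>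
      E a b \<and> E b c \<and> E c d \<and> E d a \<and> \<not> E a c \<and> \<not> E b d)"

definition has_induced_2K2 :: "'v set \<Rightarrow> ('v \<Rightarrow> 'v \<Rightarrow> bool) \<Rightarrow> bool" where
  "has_induced_2K2 V E \<longleftrightarrow> (\<exists>a\<in>V. \<exists>b\<in>V. \<exists>c\<in>V. \<exists>d\<in>V. distinct [a,b,c,d] \<and>
      E a b \<and> E c d \<and> \<not> E a c \<and> \<not> E a d \<and> \<not> E b c \<and> \<not> E b d)"

definition threshold_graph :: "'v set \<Rightarrow> ('v \<Rightarrow> 'v \<Rightarrow> bool) \<Rightarrow> bool" where
  "threshold_graph V E \<longleftrightarrow>
     \<not> has_induced_P4 V E \<and> \<not> has_induced_C4 V E \<and> \<not> has_induced_2K2 V E"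

definition split_graph :: "'v set \<Rightarrow> ('v \<Rightarrow> 'v \<Rightarrow> bool) \<Rightarrow> bool" where
  "split_graph V E \<longleftrightarrow> (\<exists>C I. C \<union> I = V \<and> C \<inter> I = {} \<and>
      (\<forall>x\<in>C. \<forall>y\<in>C. x \<noteq> y \<longrightarrow> E x y) \<and>
      (\<forall>x\<in>I. \<forall>y\<in>I. \<not> E x y))"

definition power_adj :: "('a, 'b) monoid_scheme \<Rightarrow> 'a \<Rightarrow> 'a \<Rightarrow> bool" where
  "power_adj G u v \<longleftrightarrow> u \<noteq> v \<and>
     ((\<exists>i::int. u = v [^]\<^bsub>G\<^esub> i) \<or> (\<exists>j::int. v = u [^]\<^bsub>G\<^esub> j))"

definition intersection_condition :: "('a, 'b) monoid_scheme \<Rightarrow> bool" where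
  "intersection_condition G \<longleftrightarrow> \<not> (\<exists>H K. subgroup H G \<and> subgroup K G \<and>
      (\<exists>x \<in> H - K. group.ord G x > 2) \<and> (\<exists>y \<in> K - H. group.ord G y > 2))"

text \<open>G is (isomorphic to) the dihedral group of order 2m =
  \<langle>a,b : a^m = b^2 = (ab)^2 = 1\<rangle>: G is generated by two elements satisfying these
  relations and has order 2m (the presented group has order 2m, so any such G is isomorphic
  to it and conversely).\<close>
definition is_dihedral :: "('a, 'b) monoid_scheme \<Rightarrow> nat \<Rightarrow> bool" where
  "is_dihedral G m \<longleftrightarrow> (\<exists>a\<in>carrier G. \<exists>b\<in>carrier G.
      generate G {a, b} = carrier G \<and>
      a [^]\<^bsub>G\<^esub> m = \<one>\<^bsub>G\<^esub> \<and> b [^]\<^bsub>G\<^esub> (2::nat) = \<one>\<^bsub>G\<^esub> \<and>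
      (a \<otimes>\<^bsub>G\<^esub> b) [^]\<^bsub>G\<^esub> (2::nat) = \<one>\<^bsub>G\<^esub>) \<and> order G = 2 * m"

definition elementary_abelian_2_group :: "('a, 'b) monoid_scheme \<Rightarrow> bool" where
  "elementary_abelian_2_group G \<longleftrightarrow> comm_group G \<and>
      (\<forall>x\<in>carrier G. x [^]\<^bsub>G\<^esub> (2::nat) = \<one>\<^bsub>G\<^esub>)"

definition in_threshold_family :: "('a, 'b) monoid_scheme \<Rightarrow> bool" where
  "in_threshold_family G \<longleftrightarrow>
     (cyclic_group G \<and> (\<exists>q n. Factorial_Ring.prime (q::nat) \<and> order G = q ^ n))
   \<or> elementary_abelian_2_group G
   \<or> (\<exists>k. is_dihedral G (2 ^ k))
   \<or> (\<exists>p. Factorial_Ring.prime (p::nat) \<and> odd p \<and>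
        ((cyclic_group G \<and> order G = 2 * p)
       \<or> (\<exists>n\<ge>1. is_dihedral G (p ^ n))
       \<or> is_dihedral G (2 * p)))"

end

theory Submission
  imports Defs
begin

text \<open>Call \<open>G\<close> power-comparable if of any two elements of order greater than 2 one is a power
  of the other. Then the elements of order greater than 2 together with \<open>1\<close> form a clique of
  \<open>P(G)\<close> and the involutions an independent set, so \<open>P(G)\<close> is split; comparability also
  excludes an induced \<open>P\<^sub>4\<close>, and split graphs never contain \<open>C\<^sub>4\<close> or \<open>2K\<^sub>2\<close>. Conversely, two
  incomparable elements \<open>x\<close>, \<open>y\<close> of order greater than 2 yield the induced \<open>2K\<^sub>2\<close>
  \<open>x \<dash> x\<^sup>-\<^sup>1, y \<dash> y\<^sup>-\<^sup>1\<close>, and their cyclic subgroups violate the intersection condition.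

  For the classification, a power-comparable group either has exponent 2 or has all its elements
  of order greater than 2 in one cyclic subgroup \<open>\<langle>z\<rangle>\<close>. Every element outside \<open>\<langle>z\<rangle>\<close> is then an
  involution inverting \<open>\<langle>z\<rangle>\<close> by conjugation, which forces \<open>\<langle>z\<rangle>\<close> to have index at most 2 and
  \<open>G\<close> to be cyclic or dihedral. In either case comparability amounts to the divisors of
  \<open>ord z\<close> greater than 2 forming a chain under divisibility, which happens exactly when
  \<open>ord z\<close> is a prime power or twice an odd prime.\<close>

section \<open>Split graphs\<close>

lemma split_graph_no_induced_2K2:
  assumes "split_graph V E" shows "\<not> has_induced_2K2 V E"
proof
  assume "has_induced_2K2 V E"
  then obtain a b c d where V: "a \<in> V" "b \<in> V" "c \<in> V" "d \<in> V" and dist: "distinct [a,b,c,d]"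
    and E: "E a b" "E c d" and nE: "\<not> E a c" "\<not> E a d" "\<not> E b c" "\<not> E b d"
    unfolding has_induced_2K2_def by blast
  obtain C I where CI: "C \<union> I = V" and clique: "\<forall>x\<in>C. \<forall>y\<in>C. x \<noteq> y \<longrightarrow> E x y"
    and indep: "\<forall>x\<in>I. \<forall>y\<in>I. \<not> E x y"
    using assms unfolding split_graph_def by blast
  have "a \<in> C \<or> b \<in> C" "c \<in> C \<or> d \<in> C"
    using CI V indep E by blast+
  moreover have "a \<noteq> c" "a \<noteq> d" "b \<noteq> c" "b \<noteq> d"
    using dist by auto
  ultimately show False
    using clique nE by blast
qed

lemma split_graph_no_induced_C4:
  assumes "split_graph V E" shows "\<not> has_induced_C4 V E"
proof
  assume "has_induced_C4 V E"
  then obtain a b c d where V: "a \<in> V" "b \<in> V" "c \<in> V" "d \<in> V" and dist: "distinct [a,b,c,d]"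
    and E: "E a b" "E b c" "E c d" "E d a" and nE: "\<not> E a c" "\<not> E b d"
    unfolding has_induced_C4_def by blast
  obtain C I where CI: "C \<union> I = V" and clique: "\<forall>x\<in>C. \<forall>y\<in>C. x \<noteq> y \<longrightarrow> E x y"
    and indep: "\<forall>x\<in>I. \<forall>y\<in>I. \<not> E x y"
    using assms unfolding split_graph_def by blast
  have "a \<noteq> c" "b \<noteq> d"
    using dist by auto
  then have "a \<in> I \<or> c \<in> I" "b \<in> I \<or> d \<in> I"
    using CI V clique nE by blast+
  then show False
    using indep E by blast
qed

section \<open>Divisor chains\<close>

definition large_divisors_chain :: "nat \<Rightarrow> bool" where
  "large_divisors_chain m \<longleftrightarrow>
     (\<forall>d e. d dvd m \<longrightarrow> e dvd m \<longrightarrow> 2 < d \<longrightarrow> 2 < e \<longrightarrow> d dvd e \<or> e dvd d)"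

lemma large_divisors_chain_dvd:
  assumes "large_divisors_chain m" and "k dvd m"
  shows "large_divisors_chain k"
  unfolding large_divisors_chain_def
proof (intro allI impI)
  fix d e assume "d dvd k" "e dvd k" "2 < d" "2 < e"
  with assms show "d dvd e \<or> e dvd d"
    unfolding large_divisors_chain_def using dvd_trans[of _ k m] by blast
qed

lemma large_divisors_chain_prime_power:
  assumes "Factorial_Ring.prime (q::nat)" shows "large_divisors_chain (q ^ n)"
  unfolding large_divisors_chain_def
proof (intro allI impI)
  fix d e assume "d dvd q ^ n" "e dvd q ^ n"
  then obtain i j where "d = q ^ i" "e = q ^ j"
    using divides_primepow_nat[OF assms] by blast
  then show "d dvd e \<or> e dvd d"
    using le_imp_power_dvd nat_le_linear by metis
qed

lemma large_divisors_of_double_prime: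
  assumes "Factorial_Ring.prime (p::nat)" "d dvd 2 * p" "2 < d"
  shows "d = p \<or> d = 2 * p"
proof (cases "p dvd d")
  case True
  then obtain e where e: "d = p * e" ..
  with assms have "e dvd 2"
    by (simp add: mult.commute prime_gt_0_nat)
  then have "e = 1 \<or> e = 2"
    using dvd_imp_le[of e 2] by (cases e) auto
  with e show ?thesis by auto
next
  case False
  then have "coprime d p"
    using prime_imp_coprime[OF assms(1)] coprime_commute by blast
  then have "d dvd 2"
    using assms(2) coprime_dvd_mult_left_iff by blast
  with assms(3) show ?thesis
    using dvd_imp_le by fastforce
qed

lemma large_divisors_chain_double_prime:
  assumes "Factorial_Ring.prime (p::nat)"
  shows "large_divisors_chain (2 * p)"
  unfolding large_divisors_chain_def
proof (intro allI impI)
  fix d e assume "d dvd 2 * p" "e dvd 2 * p" "2 < d" "2 < e"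
  then have "d = p \<or> d = 2 * p" "e = p \<or> e = 2 * p"
    using large_divisors_of_double_prime[OF assms] by blast+
  then show "d dvd e \<or> e dvd d"
    by auto
qed

lemma prime_power_if_unique_prime_divisor:
  assumes "0 < m"
    and unique: "\<And>p q. Factorial_Ring.prime p \<Longrightarrow> Factorial_Ring.prime q \<Longrightarrow>
      p dvd m \<Longrightarrow> q dvd m \<Longrightarrow> p = q"
  shows "\<exists>q n. Factorial_Ring.prime (q::nat) \<and> m = q ^ n"
proof (cases "m = 1")
  case True
  then show ?thesis
    using two_is_prime_nat by (metis power_0)
next
  case False
  then obtain p where p: "Factorial_Ring.prime p" "p dvd m"
    using prime_factor_nat by blast
  moreover have "m \<noteq> 0" "\<not> is_unit p"
    using assms(1) p(1) by auto
  ultimately obtain r where r: "m = p ^ multiplicity p m * r" "\<not> p dvd r"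
    using multiplicity_decompose' by blast
  have "r = 1"
  proof (rule ccontr)
    assume "r \<noteq> 1"
    then obtain q where "Factorial_Ring.prime q" "q dvd r"
      using prime_factor_nat by blast
    moreover from \<open>q dvd r\<close> have "q dvd m"
      by (subst r(1)) (rule dvd_mult)
    ultimately show False
      using unique[OF p(1) _ p(2)] r(2) by blast
  qed
  then show ?thesis
    using p(1) r(1) by auto
qed

text \<open>An odd prime divisor \<open>P\<close> of an even \<open>m\<close> forces \<open>m / P \<le> 2\<close>: otherwise \<open>P\<close> divides
  \<open>m / P\<close>, and then \<open>P\<^sup>2\<close> and \<open>2 P\<close> are incomparable large divisors.\<close>

lemma large_divisors_chain_even:
  assumes chain: "large_divisors_chain m" and "0 < m" "even m"
    and P: "Factorial_Ring.prime P" "odd P" "P dvd m"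
  shows "m = 2 * P"
proof -
  obtain e where m: "m = P * e"
    using P(3) ..
  have "even e"
    using \<open>even m\<close> P(2) m by simp
  have P_gt_2: "2 < P"
    using prime_ge_2_nat[OF P(1)] P(2) by (cases "P = 2") auto
  have "e \<le> 2"
  proof (rule ccontr)
    assume "\<not> e \<le> 2"
    then have "P dvd e \<or> e dvd P"
      using chain P_gt_2 m unfolding large_divisors_chain_def by simp
    then have "P dvd e"
      using \<open>even e\<close> P(2) dvd_trans by blast
    then have "P * P dvd m" "2 * P dvd m"
      using m \<open>even e\<close> by (auto simp: mult.commute)
    moreover have "2 < P * P" "2 < 2 * P"
      using P_gt_2 le_square[of P] by linarith+
    ultimately have "P * P dvd 2 * P \<or> 2 * P dvd P * P"
      using chain unfolding large_divisors_chain_def by blast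
    then have "P dvd 2 \<or> 2 dvd P"
      using P_gt_2 by (auto simp: mult.commute)
    then show False
      using P_gt_2 P(2) dvd_imp_le[of P 2] by linarith
  qed
  moreover have "e \<noteq> 0"
    using \<open>0 < m\<close> m by auto
  ultimately have "e = 2"
    using \<open>even e\<close> by presburger
  with m show ?thesis
    by simp
qed

lemma large_divisors_chain_cases:
  assumes chain: "large_divisors_chain m" and "0 < m"
  shows "(\<exists>q n. Factorial_Ring.prime q \<and> m = q ^ n) \<or>
    (\<exists>p. Factorial_Ring.prime p \<and> odd p \<and> m = 2 * p)"
proof (cases "\<exists>P. Factorial_Ring.prime P \<and> odd P \<and> P dvd m \<and> even m")
  case True
  then show ?thesis
    using large_divisors_chain_even[OF chain \<open>0 < m\<close>] by blast
next
  case False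
  have "p = q" if p: "Factorial_Ring.prime p" "p dvd m" and q: "Factorial_Ring.prime q" "q dvd m" for p q
  proof (cases "even m")
    case True
    have "r = 2" if "Factorial_Ring.prime r" "r dvd m" for r
    proof (rule ccontr)
      assume "r \<noteq> 2"
      then have "odd r"
        using that prime_ge_2_nat[of r] prime_odd_nat[of r] by simp
      with False True that show False
        by blast
    qed
    then show ?thesis
      using p q by metis
  next
    case False
    then have "odd p" "odd q"
      using p(2) q(2) dvd_trans by blast+
    then have "2 < p" "2 < q"
      using prime_ge_2_nat[OF p(1)] prime_ge_2_nat[OF q(1)] by (auto simp: le_less)
    then have "p dvd q \<or> q dvd p"
      using chain p q unfolding large_divisors_chain_def by blast
    then show ?thesis
      using p(1) q(1) primes_dvd_imp_eq by blast
  qed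
  then show ?thesis
    using prime_power_if_unique_prime_divisor[OF \<open>0 < m\<close>] by blast
qed

lemma in_threshold_family_if_cyclic_or_dihedral:
  assumes "2 < m" and "cyclic_group G \<and> order G = m \<or> is_dihedral G m"
    and shape: "(\<exists>q n. Factorial_Ring.prime q \<and> m = q ^ n) \<or>
      (\<exists>p. Factorial_Ring.prime p \<and> odd p \<and> m = 2 * p)"
  shows "in_threshold_family G"
  using shape
proof (elim disjE exE conjE)
  fix q n assume q: "Factorial_Ring.prime q" and m: "m = q ^ n"
  have "n \<noteq> 0"
    using \<open>2 < m\<close> m by (cases n) auto
  moreover have "q = 2 \<or> odd q"
    using q prime_ge_2_nat[OF q] prime_odd_nat[OF q] by linarith
  ultimately show ?thesis
    using assms(2) q m unfolding in_threshold_family_def by auto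
next
  fix p assume "Factorial_Ring.prime p" "odd p" "m = 2 * p"
  then show ?thesis
    using assms(2) unfolding in_threshold_family_def by auto
qed

section \<open>Power graphs of groups with nested cyclic subgroups\<close>

text \<open>In a finite group \<open>x\<^sup>2 \<noteq> 1\<close> expresses \<open>ord x > 2\<close>. All five conditions of the theorem are shown
  equivalent to this one.\<close>

definition power_comparable :: "('a, 'b) monoid_scheme \<Rightarrow> bool" where
  "power_comparable G \<longleftrightarrow> (\<forall>x\<in>carrier G. \<forall>y\<in>carrier G.
     x [^]\<^bsub>G\<^esub> (2::nat) \<noteq> \<one>\<^bsub>G\<^esub> \<longrightarrow> y [^]\<^bsub>G\<^esub> (2::nat) \<noteq> \<one>\<^bsub>G\<^esub> \<longrightarrow>
     x \<in> generate G {y} \<or> y \<in> generate G {x})"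

context group begin

lemma nat_pow_two: "x \<in> carrier G \<Longrightarrow> x [^] (2::nat) = x \<otimes> x"
  by (simp add: numeral_2_eq_2)

lemma generate_singleton_mono:
  "x \<in> carrier G \<Longrightarrow> y \<in> generate G {x} \<Longrightarrow> generate G {y} \<subseteq> generate G {x}"
  by (rule generate_subgroup_incl) (auto intro: generate_is_subgroup)

lemma generate_singleton_inv:
  assumes x: "x \<in> carrier G"
  shows "generate G {inv x} = generate G {x}"
proof -
  have "inv x \<in> generate G {x}" "inv (inv x) \<in> generate G {inv x}"
    by (auto intro: generate.inv)
  then show ?thesis
    using x generate_singleton_mono[of x "inv x"] generate_singleton_mono[of "inv x" x] by auto
qed

lemma generate_involution:
  assumes x: "x \<in> carrier G" and x2: "x [^] (2::nat) = \<one>"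
  shows "generate G {x} = {\<one>, x}"
proof
  have xx: "x \<otimes> x = \<one>"
    using x x2 by (simp add: nat_pow_two)
  have inv_x: "inv x = x"
    using x xx by (simp add: inv_equality)
  show "generate G {x} \<subseteq> {\<one>, x}"
  proof
    fix y assume "y \<in> generate G {x}"
    then show "y \<in> {\<one>, x}"
      by (induction rule: generate.induct) (use x xx inv_x in auto)
  qed
  show "{\<one>, x} \<subseteq> generate G {x}"
    by (auto intro: generate.one generate.incl)
qed

lemma power_adj_iff_generate:
  "u \<in> carrier G \<Longrightarrow> v \<in> carrier G \<Longrightarrow>
    power_adj G u v \<longleftrightarrow> u \<noteq> v \<and> (u \<in> generate G {v} \<or> v \<in> generate G {u})"
  unfolding power_adj_def by (auto simp: generate_pow)

lemma ord_dvd_of_mem_generate: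
  assumes x: "x \<in> carrier G" and y: "y \<in> generate G {x}"
  shows "ord y dvd ord x"
proof -
  obtain i :: int where i: "y = x [^] i"
    using y generate_pow[OF x] by blast
  have "y [^] int (ord x) = x [^] (i * int (ord x))"
    using x by (simp add: i int_pow_pow)
  also have "\<dots> = \<one>"
    using x by (simp add: int_pow_eq_id)
  finally show ?thesis
    using x i int_pow_eq_id[of y "int (ord x)"] by simp
qed

lemma ord_gt_2_iff:
  assumes "finite (carrier G)" and x: "x \<in> carrier G"
  shows "2 < ord x \<longleftrightarrow> x [^] (2::nat) \<noteq> \<one>"
proof -
  have pos: "1 \<le> ord x" using ord_ge_1 assms .
  then have "ord x dvd 2 \<longleftrightarrow> ord x = 1 \<or> ord x = 2"
    using dvd_imp_le[of "ord x" 2] by (auto simp: numeral_2_eq_2 le_Suc_eq)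
  with pow_eq_id[OF x, of 2] pos show ?thesis
    by auto
qed

lemma power_comparable_imp_split_graph:
  assumes "power_comparable G"
  shows "split_graph (carrier G) (power_adj G)"
  unfolding split_graph_def
proof (intro exI conjI)
  let ?C = "{x \<in> carrier G. x [^] (2::nat) \<noteq> \<one>} \<union> {\<one>}"
  let ?I = "{x \<in> carrier G. x [^] (2::nat) = \<one> \<and> x \<noteq> \<one>}"
  show "?C \<union> ?I = carrier G" "?C \<inter> ?I = {}"
    by auto
  show "\<forall>x\<in>?C. \<forall>y\<in>?C. x \<noteq> y \<longrightarrow> power_adj G x y"
    using assms generate.one unfolding power_comparable_def by (auto simp: power_adj_iff_generate)
  show "\<forall>x\<in>?I. \<forall>y\<in>?I. \<not> power_adj G x y"
    by (auto simp: power_adj_iff_generate generate_involution)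
qed

lemma power_adj_via_power:
  assumes comparable: "power_comparable G"
    and x: "x \<in> carrier G" and w: "w \<in> carrier G" and "x \<noteq> w"
    and "power_adj G x y" and y_w: "y \<in> generate G {w}" and "y \<noteq> \<one>"
  shows "power_adj G x w"
proof -
  have y: "y \<in> carrier G"
    using y_w w generate_incl by blast
  have non_involution: "t [^] (2::nat) \<noteq> \<one>"
    if "t \<in> carrier G" "y \<in> generate G {t}" "y \<noteq> t" for t
    using that \<open>y \<noteq> \<one>\<close> generate_involution by blast
  from \<open>power_adj G x y\<close> consider "x \<in> generate G {y}" | "y \<in> generate G {x}" "x \<noteq> y"
    using x y by (auto simp: power_adj_iff_generate)
  then show ?thesis
  proof cases
    case 1
    then show ?thesis
      using generate_singleton_mono[OF w y_w] x w \<open>x \<noteq> w\<close> by (auto simp: power_adj_iff_generate)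
  next
    case 2
    show ?thesis
    proof (cases "y = w")
      case False
      then have "x \<in> generate G {w} \<or> w \<in> generate G {x}"
        using comparable x w non_involution 2 y_w unfolding power_comparable_def by blast
      then show ?thesis
        using x w \<open>x \<noteq> w\<close> by (auto simp: power_adj_iff_generate)
    qed (use \<open>power_adj G x y\<close> in simp)
  qed
qed

lemma power_comparable_imp_no_induced_P4:
  assumes comparable: "power_comparable G"
  shows "\<not> has_induced_P4 (carrier G) (power_adj G)"
proof
  assume "has_induced_P4 (carrier G) (power_adj G)"
  then obtain a b c d where abcd: "a \<in> carrier G" "b \<in> carrier G" "c \<in> carrier G" "d \<in> carrier G"
    and dist: "distinct [a,b,c,d]"
    and E: "power_adj G a b" "power_adj G b c" "power_adj G c d"
    and nE: "\<not> power_adj G a c" "\<not> power_adj G a d" "\<not> power_adj G b d"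
    unfolding has_induced_P4_def by blast
  have adj_one: "power_adj G u \<one>" if "u \<in> carrier G" "u \<noteq> \<one>" for u
    using that generate.one by (auto simp: power_adj_iff_generate)
  have sym: "power_adj G u v \<Longrightarrow> power_adj G v u" for u v
    unfolding power_adj_def by blast
  have "b \<noteq> \<one>"
    using adj_one[of d] abcd(4) dist nE(3) sym by auto
  have "c \<noteq> \<one>"
    using adj_one[of a] abcd(1) dist nE(1) by auto
  from E(2) consider "c \<in> generate G {b}" | "b \<in> generate G {c}"
    using abcd by (auto simp: power_adj_iff_generate)
  then show False
  proof cases
    case 1
    then have "power_adj G d b"
      using power_adj_via_power[OF comparable abcd(4,2) _ sym[OF E(3)] 1 \<open>c \<noteq> \<one>\<close>] dist by auto
    then show False
      using nE(3) sym by blast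
  next
    case 2
    then have "power_adj G a c"
      using power_adj_via_power[OF comparable abcd(1,3) _ E(1) 2 \<open>b \<noteq> \<one>\<close>] dist by auto
    then show False
      using nE(1) by blast
  qed
qed

lemma not_power_comparable_imp_induced_2K2:
  assumes "\<not> power_comparable G"
  shows "has_induced_2K2 (carrier G) (power_adj G)"
proof -
  obtain x y where x: "x \<in> carrier G" and y: "y \<in> carrier G"
    and x2: "x [^] (2::nat) \<noteq> \<one>" and y2: "y [^] (2::nat) \<noteq> \<one>"
    and xy: "x \<notin> generate G {y}" and yx: "y \<notin> generate G {x}"
    using assms unfolding power_comparable_def by blast
  have inv_neq: "t \<noteq> inv t" if "t \<in> carrier G" "t [^] (2::nat) \<noteq> \<one>" for t
    using that r_inv[of t] nat_pow_two[of t] by metis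
  have apart: "u \<noteq> v \<and> u \<notin> generate G {v} \<and> v \<notin> generate G {u}"
    if u: "u \<in> {x, inv x}" and v: "v \<in> {y, inv y}" for u v
  proof -
    have carrier: "u \<in> carrier G" "v \<in> carrier G"
      using u v x y by auto
    have gen: "generate G {u} = generate G {x}" "generate G {v} = generate G {y}"
      using u v x y generate_singleton_inv by auto
    have "x \<in> generate G {u}" "y \<in> generate G {v}"
      unfolding gen by (auto intro: generate.incl)
    then have "u \<notin> generate G {v}" "v \<notin> generate G {u}"
      using xy yx generate_singleton_mono[OF carrier(2), of u] generate_singleton_mono[OF carrier(1), of v]
      unfolding gen by auto
    moreover have "v \<in> generate G {v}"
      by (auto intro: generate.incl)
    ultimately show ?thesis
      by auto
  qed
  have nonadjacent: "\<not> power_adj G u v" if "u \<in> {x, inv x}" "v \<in> {y, inv y}" for u v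
    using apart[OF that] that x y by (auto simp: power_adj_iff_generate)
  have "distinct [x, inv x, y, inv y]"
    using inv_neq[OF x x2] inv_neq[OF y y2]
      apart[of x y] apart[of x "inv y"] apart[of "inv x" y] apart[of "inv x" "inv y"] by simp
  moreover have "power_adj G t (inv t)" if "t \<in> carrier G" "t [^] (2::nat) \<noteq> \<one>" for t
  proof -
    have "inv t \<in> generate G {t}"
      by (rule generate.inv) simp
    then show ?thesis
      using that inv_neq[OF that] by (simp add: power_adj_iff_generate)
  qed
  ultimately show ?thesis
    unfolding has_induced_2K2_def using x y x2 y2
      nonadjacent[of x y] nonadjacent[of x "inv y"] nonadjacent[of "inv x" y] nonadjacent[of "inv x" "inv y"]
    by (intro bexI[of _ x] bexI[of _ "inv x"] bexI[of _ y] bexI[of _ "inv y"]) simp_all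
qed

lemma power_comparable_iff_intersection_condition:
  assumes fin: "finite (carrier G)"
  shows "power_comparable G \<longleftrightarrow> intersection_condition G"
proof
  assume comparable: "power_comparable G"
  show "intersection_condition G"
    unfolding intersection_condition_def
  proof clarify
    fix H K x y assume H: "subgroup H G" and K: "subgroup K G"
      and x: "x \<in> H" "x \<notin> K" "2 < ord x" and y: "y \<in> K" "y \<notin> H" "2 < ord y"
    have "x \<in> carrier G" "y \<in> carrier G"
      using H K x y subgroup.subset by blast+
    then have "x \<in> generate G {y} \<or> y \<in> generate G {x}"
      using comparable x y ord_gt_2_iff[OF fin] unfolding power_comparable_def by blast
    then show False
      using x y generate_subgroup_incl[of "{y}" K] generate_subgroup_incl[of "{x}" H] H K by blast
  qed
next
  assume ic: "intersection_condition G"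
  show "power_comparable G"
    unfolding power_comparable_def
  proof (intro ballI impI; rule ccontr)
    fix x y assume x: "x \<in> carrier G" and y: "y \<in> carrier G"
      and "x [^] (2::nat) \<noteq> \<one>" "y [^] (2::nat) \<noteq> \<one>"
      and "\<not> (x \<in> generate G {y} \<or> y \<in> generate G {x})"
    then have "x \<in> generate G {x} - generate G {y}" "y \<in> generate G {y} - generate G {x}"
      and "2 < ord x" "2 < ord y"
      using ord_gt_2_iff[OF fin] by (auto intro: generate.incl)
    moreover have "subgroup (generate G {x}) G" "subgroup (generate G {y}) G"
      using x y by (auto intro: generate_is_subgroup)
    ultimately show False
      using ic unfolding intersection_condition_def by blast
  qed
qed

lemma mem_generate_pow_if_pow_eq_one:
  assumes fin: "finite (carrier G)" and g: "g \<in> carrier G" and ord_g: "ord g = e * k" and "0 < e"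
    and u: "u \<in> generate G {g}" and u_e: "u [^] e = \<one>"
  shows "u \<in> generate G {g [^] k}"
proof -
  obtain i :: nat where i: "u = g [^] i"
    using u generate_pow_on_finite_carrier[OF fin g] by blast
  have "g [^] (i * e) = \<one>"
    using u_e g by (simp add: i nat_pow_pow)
  then have "e * k dvd e * i"
    using pow_eq_id[OF g] ord_g by (simp add: mult.commute)
  then obtain r where "i = k * r"
    using \<open>0 < e\<close> by auto
  then have "u = (g [^] k) [^] r"
    using g by (simp add: i nat_pow_pow)
  then show ?thesis
    using generate_pow_on_finite_carrier[OF fin] g by auto
qed

lemma mem_generate_if_ord_dvd:
  assumes fin: "finite (carrier G)" and g: "g \<in> carrier G"
    and x: "x \<in> generate G {g}" and y: "y \<in> generate G {g}" and "ord x dvd ord y"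
  shows "x \<in> generate G {y}"
proof -
  have x_carrier: "x \<in> carrier G" and y_carrier: "y \<in> carrier G"
    using x y g generate_incl by blast+
  have e_pos: "0 < ord y"
    using ord_ge_1[OF fin y_carrier] by simp
  obtain k where k: "ord g = ord y * k"
    using ord_dvd_of_mem_generate[OF g y] ..
  then have "k \<noteq> 0"
    using ord_ge_1[OF fin g] by auto
  define h where "h = g [^] k"
  have h: "h \<in> carrier G"
    unfolding h_def using g by simp
  have "ord h = ord y"
    unfolding h_def using ord_pow[OF g _ \<open>k \<noteq> 0\<close>] k e_pos \<open>k \<noteq> 0\<close> by simp
  have "generate G {y} \<subseteq> generate G {h}"
  proof
    fix u assume u: "u \<in> generate G {y}"
    have "u \<in> carrier G"
      using u y_carrier generate_incl by blast
    then have "u [^] ord y = \<one>"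
      using ord_dvd_of_mem_generate[OF y_carrier u] pow_eq_id by blast
    moreover have "u \<in> generate G {g}"
      using u generate_singleton_mono[OF g y] by blast
    ultimately show "u \<in> generate G {h}"
      unfolding h_def using mem_generate_pow_if_pow_eq_one[OF fin g k e_pos] by blast
  qed
  moreover have "card (generate G {y}) = card (generate G {h})"
    using generate_pow_card[OF y_carrier] generate_pow_card[OF h] \<open>ord h = ord y\<close> by simp
  moreover have "finite (generate G {h})"
    using h generate_incl by (blast intro: finite_subset[OF _ fin])
  ultimately have "generate G {y} = generate G {h}"
    using card_subset_eq by blast
  moreover have "x [^] ord y = \<one>"
    using \<open>ord x dvd ord y\<close> pow_eq_id[OF x_carrier] by blast
  ultimately show ?thesis
    unfolding h_def using mem_generate_pow_if_pow_eq_one[OF fin g k e_pos x] by blast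
qed

lemma power_comparable_if_non_involutions_in_cyclic:
  assumes fin: "finite (carrier G)" and g: "g \<in> carrier G" and chain: "large_divisors_chain (ord g)"
    and non_involutions: "\<forall>x\<in>carrier G. x [^] (2::nat) \<noteq> \<one> \<longrightarrow> x \<in> generate G {g}"
  shows "power_comparable G"
  unfolding power_comparable_def
proof (intro ballI impI)
  fix x y assume x: "x \<in> carrier G" and y: "y \<in> carrier G"
    and "x [^] (2::nat) \<noteq> \<one>" "y [^] (2::nat) \<noteq> \<one>"
  then have gen: "x \<in> generate G {g}" "y \<in> generate G {g}" and "2 < ord x" "2 < ord y"
    using non_involutions ord_gt_2_iff[OF fin] by auto
  moreover have "ord x dvd ord g" "ord y dvd ord g"
    using gen ord_dvd_of_mem_generate[OF g] by blast+
  ultimately have "ord x dvd ord y \<or> ord y dvd ord x"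
    using chain unfolding large_divisors_chain_def by blast
  then show "x \<in> generate G {y} \<or> y \<in> generate G {x}"
    using mem_generate_if_ord_dvd[OF fin g] gen by blast
qed

lemma generate_singleton_comm:
  assumes x: "x \<in> carrier G" and "c \<in> generate G {x}" "d \<in> generate G {x}"
  shows "c \<otimes> d = d \<otimes> c"
proof -
  obtain i j :: int where "c = x [^] i" "d = x [^] j"
    using assms generate_pow[OF x] by blast
  then show ?thesis
    using x by (simp add: int_pow_mult[symmetric] add.commute)
qed

lemma involution_conj_generate:
  assumes a: "a \<in> carrier G" and b: "b \<in> carrier G"
    and b2: "b [^] (2::nat) = \<one>" and ab2: "(a \<otimes> b) [^] (2::nat) = \<one>"
    and c: "c \<in> generate G {a}"
  shows "b \<otimes> c \<otimes> b = inv c"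
proof -
  have bb: "b \<otimes> b = \<one>" and inv_b: "inv b = b"
    using b b2 by (simp_all add: nat_pow_two inv_equality)
  have "a \<otimes> (b \<otimes> a \<otimes> b) = \<one>"
    using ab2 a b by (simp add: nat_pow_two m_assoc)
  then have bab: "b \<otimes> a \<otimes> b = inv a"
    using inv_equality[OF inv_comm] a b by simp
  have gen_carrier: "generate G {a} \<subseteq> carrier G"
    using a generate_incl by blast
  from c show ?thesis
  proof (induction rule: generate.induct)
    case one
    then show ?case using bb b by simp
  next
    case (incl h)
    then show ?case using bab by simp
  next
    case (inv h)
    have "b \<otimes> inv a \<otimes> b = inv (b \<otimes> a \<otimes> b)"
      using a b inv_b by (simp add: inv_mult_group m_assoc)
    with inv bab a show ?case by simp
  next
    case (eng h1 h2)
    have h: "h1 \<in> carrier G" "h2 \<in> carrier G"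
      using eng.hyps gen_carrier by auto
    have "(b \<otimes> h1 \<otimes> b) \<otimes> (b \<otimes> h2 \<otimes> b) = b \<otimes> h1 \<otimes> (b \<otimes> b) \<otimes> h2 \<otimes> b"
      using h b by (simp add: m_assoc)
    then have "b \<otimes> (h1 \<otimes> h2) \<otimes> b = (b \<otimes> h1 \<otimes> b) \<otimes> (b \<otimes> h2 \<otimes> b)"
      using h b bb by (simp add: m_assoc)
    also have "\<dots> = inv h1 \<otimes> inv h2"
      using eng.IH by simp
    also have "\<dots> = inv (h2 \<otimes> h1)"
      using h by (simp add: inv_mult_group)
    also have "h2 \<otimes> h1 = h1 \<otimes> h2"
      using generate_singleton_comm[OF a] eng.hyps by blast
    finally show ?case .
  qed
qed

lemma generate_pair_subset_cosets:
  assumes a: "a \<in> carrier G" and b: "b \<in> carrier G"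
    and b2: "b [^] (2::nat) = \<one>" and ab2: "(a \<otimes> b) [^] (2::nat) = \<one>"
    and x: "x \<in> generate G {a, b}"
  shows "x \<in> generate G {a} \<or> (\<exists>c\<in>generate G {a}. x = c \<otimes> b)"
proof -
  let ?A = "generate G {a}"
  have A: "subgroup ?A G"
    using a by (auto intro: generate_is_subgroup)
  have bb: "b \<otimes> b = \<one>" and inv_b: "inv b = b"
    using b b2 by (simp_all add: nat_pow_two inv_equality)
  have conj: "b \<otimes> c \<otimes> b = inv c" if "c \<in> ?A" for c
    using involution_conj_generate[OF a b b2 ab2 that] .
  from x show ?thesis
  proof (induction rule: generate.induct)
    case one
    then show ?case using generate.one by blast
  next
    case (incl h)
    then show ?case
      using generate.incl[of a "{a}"] generate.one[of G "{a}"] b by force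
  next
    case (inv h)
    then show ?case
      using generate.inv[of a "{a}"] generate.one[of G "{a}"] b inv_b by force
  next
    case (eng h1 h2)
    have carrier: "u \<in> carrier G" if "u \<in> ?A" for u
      using subgroup.subset[OF A] that by blast
    from eng.IH show ?case
    proof (elim disjE bexE)
      assume "h1 \<in> ?A" "h2 \<in> ?A"
      then show ?case using subgroup.m_closed[OF A] by blast
    next
      fix c assume "h1 \<in> ?A" "c \<in> ?A" "h2 = c \<otimes> b"
      then have "h1 \<otimes> h2 = (h1 \<otimes> c) \<otimes> b"
        using carrier b by (simp add: m_assoc)
      then show ?case
        using subgroup.m_closed[OF A \<open>h1 \<in> ?A\<close> \<open>c \<in> ?A\<close>] by blast
    next
      fix c assume "c \<in> ?A" "h1 = c \<otimes> b" "h2 \<in> ?A"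
      then have "h1 \<otimes> h2 = (c \<otimes> (b \<otimes> h2 \<otimes> b)) \<otimes> b"
        using carrier b bb by (simp add: m_assoc)
      then show ?case
        using conj[OF \<open>h2 \<in> ?A\<close>] subgroup.m_closed[OF A \<open>c \<in> ?A\<close> subgroup.m_inv_closed[OF A \<open>h2 \<in> ?A\<close>]]
        by auto
    next
      fix c d assume "c \<in> ?A" "h1 = c \<otimes> b" "d \<in> ?A" "h2 = d \<otimes> b"
      then have "h1 \<otimes> h2 = c \<otimes> (b \<otimes> d \<otimes> b)"
        using carrier b by (simp add: m_assoc)
      then show ?case
        using conj[OF \<open>d \<in> ?A\<close>] subgroup.m_closed[OF A \<open>c \<in> ?A\<close> subgroup.m_inv_closed[OF A \<open>d \<in> ?A\<close>]]
        by auto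
    qed
  qed
qed

lemma dihedral_non_involutions_in_rotations:
  assumes "is_dihedral G m"
  obtains a where "a \<in> carrier G" "a [^] m = \<one>"
    and "\<forall>x\<in>carrier G. x [^] (2::nat) \<noteq> \<one> \<longrightarrow> x \<in> generate G {a}"
proof -
  obtain a b where a: "a \<in> carrier G" and b: "b \<in> carrier G" and gen: "generate G {a, b} = carrier G"
    and "a [^] m = \<one>" and b2: "b [^] (2::nat) = \<one>" and ab2: "(a \<otimes> b) [^] (2::nat) = \<one>"
    using assms unfolding is_dihedral_def by blast
  have "x [^] (2::nat) = \<one>" if x_carrier: "x \<in> carrier G" and x_out: "x \<notin> generate G {a}" for x
  proof -
    from x_carrier have "x \<in> generate G {a, b}"
      by (simp add: gen)
    then obtain c where c: "c \<in> generate G {a}" and x: "x = c \<otimes> b"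
      using generate_pair_subset_cosets[OF a b b2 ab2] x_out by blast
    then have "c \<in> carrier G"
      using a generate_incl by blast
    then have "x [^] (2::nat) = c \<otimes> (b \<otimes> c \<otimes> b)"
      using b by (simp add: x nat_pow_two m_assoc)
    then show ?thesis
      using involution_conj_generate[OF a b b2 ab2 c] \<open>c \<in> carrier G\<close> by simp
  qed
  then show ?thesis
    using that a \<open>a [^] m = \<one>\<close> by blast
qed

lemma cyclic_group_generator:
  assumes "cyclic_group G"
  obtains g where "g \<in> carrier G" "carrier G = generate G {g}" "ord g = order G"
proof -
  obtain g where g: "g \<in> carrier G" and "carrier G = range (\<lambda>n::int. g [^] n)"
    using assms cyclic_group by blast
  then have "carrier G = generate G {g}"
    using generate_pow[OF g] by auto
  with g that show ?thesis
    using generate_pow_card[OF g] unfolding order_def by simp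
qed

lemma in_threshold_family_imp_power_comparable:
  assumes fin: "finite (carrier G)" and family: "in_threshold_family G"
  shows "power_comparable G"
proof -
  have dihedral: "power_comparable G" if "is_dihedral G m" and chain: "large_divisors_chain m" for m
  proof -
    obtain a where a: "a \<in> carrier G" "a [^] m = \<one>"
      and "\<forall>x\<in>carrier G. x [^] (2::nat) \<noteq> \<one> \<longrightarrow> x \<in> generate G {a}"
      using dihedral_non_involutions_in_rotations[OF \<open>is_dihedral G m\<close>] by blast
    moreover have "large_divisors_chain (ord a)"
      using large_divisors_chain_dvd[OF chain] pow_eq_id a by blast
    ultimately show ?thesis
      using power_comparable_if_non_involutions_in_cyclic[OF fin] by blast
  qed
  have cyclic: "power_comparable G" if "cyclic_group G" and chain: "large_divisors_chain (order G)"
  proof -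
    obtain g where "g \<in> carrier G" "carrier G = generate G {g}" "ord g = order G"
      using cyclic_group_generator[OF \<open>cyclic_group G\<close>] .
    with chain show ?thesis
      using power_comparable_if_non_involutions_in_cyclic[OF fin] by simp
  qed
  from family show ?thesis
    unfolding in_threshold_family_def
  proof (elim disjE exE conjE)
    assume "elementary_abelian_2_group G"
    then show ?thesis
      unfolding elementary_abelian_2_group_def power_comparable_def by blast
  qed (use cyclic dihedral large_divisors_chain_prime_power large_divisors_chain_double_prime
        two_is_prime_nat in metis)+
qed

lemma comm_group_if_exponent_two:
  assumes sq: "\<forall>x\<in>carrier G. x [^] (2::nat) = \<one>"
  shows "comm_group G"
proof (rule group_comm_groupI)
  have inv_self: "inv x = x" if "x \<in> carrier G" for x
    using sq that by (simp add: nat_pow_two inv_equality)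
  fix x y assume "x \<in> carrier G" "y \<in> carrier G"
  then show "x \<otimes> y = y \<otimes> x"
    using inv_self[of "x \<otimes> y"] inv_self[of x] inv_self[of y] by (simp add: inv_mult_group)
qed

lemma power_comparable_imp_large_divisors_chain_ord:
  assumes fin: "finite (carrier G)" and comparable: "power_comparable G" and z: "z \<in> carrier G"
  shows "large_divisors_chain (ord z)"
  unfolding large_divisors_chain_def
proof (intro allI impI)
  have elem: "ord (z [^] (ord z div d)) = d" if "d dvd ord z" for d
  proof -
    have "ord z div d \<noteq> 0"
      using that ord_ge_1[OF fin z] by (auto elim: dvdE)
    then show ?thesis
      using ord_pow[OF z _ \<open>ord z div d \<noteq> 0\<close>] that ord_ge_1[OF fin z] by (auto elim!: dvdE)
  qed
  fix d e assume d: "d dvd ord z" "2 < d" and e: "e dvd ord z" "2 < e"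
  define u v where "u = z [^] (ord z div d)" and "v = z [^] (ord z div e)"
  have uv: "u \<in> carrier G" "v \<in> carrier G" "ord u = d" "ord v = e"
    using z elem d e by (simp_all add: u_def v_def)
  then have "u [^] (2::nat) \<noteq> \<one>" "v [^] (2::nat) \<noteq> \<one>"
    using d e ord_gt_2_iff[OF fin] by auto
  then have "u \<in> generate G {v} \<or> v \<in> generate G {u}"
    using comparable uv unfolding power_comparable_def by blast
  then show "d dvd e \<or> e dvd d"
    using ord_dvd_of_mem_generate uv by metis
qed

lemma power_comparable_obtain_maximal:
  assumes fin: "finite (carrier G)" and comparable: "power_comparable G"
    and z0: "z0 \<in> carrier G" "z0 [^] (2::nat) \<noteq> \<one>"
  obtains z where "z \<in> carrier G" "z [^] (2::nat) \<noteq> \<one>"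
    and "\<forall>x\<in>carrier G. x [^] (2::nat) \<noteq> \<one> \<longrightarrow> x \<in> generate G {z}"
proof -
  let ?S = "{x \<in> carrier G. x [^] (2::nat) \<noteq> \<one>}"
  obtain z where z: "z \<in> ?S" and max: "\<forall>x. x \<in> ?S \<longrightarrow> ord x \<le> ord z"
    using ex_has_greatest_nat[of "\<lambda>x. x \<in> ?S" z0 ord "order G + 1"] z0 ord_le_group_order[OF fin]
    by fastforce
  have "x \<in> generate G {z}" if x: "x \<in> ?S" for x
  proof -
    have "x \<in> generate G {z} \<or> z \<in> generate G {x}"
      using comparable x z unfolding power_comparable_def by blast
    moreover have "generate G {z} = generate G {x}" if "z \<in> generate G {x}"
    proof (rule card_subset_eq)
      show "finite (generate G {x})"
        using x generate_incl by (blast intro: finite_subset[OF _ fin])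
      show "generate G {z} \<subseteq> generate G {x}"
        using generate_singleton_mono that x by blast
      have "ord z dvd ord x" "ord x \<le> ord z"
        using max x ord_dvd_of_mem_generate[OF _ that] by auto
      moreover have "0 < ord x"
        using ord_ge_1[OF fin, of x] x by simp
      ultimately
      have "ord z = ord x"
        using dvd_imp_le by (metis le_antisym)
      then show "card (generate G {z}) = card (generate G {x})"
        using x z generate_pow_card by simp
    qed
    ultimately show ?thesis
      using generate.incl[of x "{x}"] by auto
  qed
  with z that show ?thesis
    by blast
qed

lemma mult_subgroup_outside:
  assumes A: "subgroup A G" and t: "t \<in> carrier G" "t \<notin> A" and c: "c \<in> A"
  shows "t \<otimes> c \<notin> A" "c \<otimes> t \<notin> A"
proof -
  have c_carrier: "c \<in> carrier G" "inv c \<in> A"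
    using c subgroup.subset[OF A] subgroup.m_inv_closed[OF A] by auto
  have "t = (t \<otimes> c) \<otimes> inv c"
    using t c_carrier by (simp add: m_assoc)
  moreover have "t = inv c \<otimes> (c \<otimes> t)"
    using t c_carrier by (simp add: m_assoc[symmetric])
  ultimately
  show "t \<otimes> c \<notin> A" "c \<otimes> t \<notin> A"
    using t c_carrier subgroup.m_closed[OF A] by metis+
qed

context
  fixes A
  assumes A: "subgroup A G"
    and outside_involution: "\<And>t. t \<in> carrier G \<Longrightarrow> t \<notin> A \<Longrightarrow> t \<otimes> t = \<one>"
begin

lemma outside_conj_inverts:
  assumes t: "t \<in> carrier G" "t \<notin> A" and c: "c \<in> A"
  shows "t \<otimes> c \<otimes> t = inv c"
proof -
  have "c \<in> carrier G"
    using c subgroup.subset[OF A] by blast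
  moreover have "(t \<otimes> c) \<otimes> (t \<otimes> c) = \<one>"
    using outside_involution mult_subgroup_outside[OF A t c] t \<open>c \<in> carrier G\<close> by simp
  ultimately show ?thesis
    using t inv_equality[of "t \<otimes> c \<otimes> t" c] by (simp add: m_assoc)
qed

text \<open>If \<open>s\<close>, \<open>g\<close> and \<open>s g\<close> all lie outside \<open>A\<close>, conjugation by the involution \<open>s g\<close> would be
  both inversion and the composite of two inversions on \<open>A\<close>, so \<open>A\<close> would have exponent 2.\<close>

lemma outside_mult_mem:
  assumes z: "z \<in> A" "z \<otimes> z \<noteq> \<one>"
    and s: "s \<in> carrier G" "s \<notin> A" and g: "g \<in> carrier G" "g \<notin> A"
  shows "s \<otimes> g \<in> A"
proof (rule ccontr)
  assume sg: "s \<otimes> g \<notin> A"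
  have z_carrier: "z \<in> carrier G" "inv z \<in> A"
    using z subgroup.subset[OF A] subgroup.m_inv_closed[OF A] by auto
  have inv_self: "inv t = t" if "t \<in> carrier G" "t \<notin> A" for t
    using inv_equality[OF outside_involution[OF that]] that by simp
  have "inv z = (s \<otimes> g) \<otimes> z \<otimes> (s \<otimes> g)"
    using outside_conj_inverts[OF _ sg z(1)] s g by simp
  also have "\<dots> = (s \<otimes> g) \<otimes> z \<otimes> inv (s \<otimes> g)"
    using inv_self[OF _ sg] s g by simp
  also have "\<dots> = s \<otimes> (g \<otimes> z \<otimes> g) \<otimes> s"
    using s g z_carrier by (simp add: inv_mult_group inv_self m_assoc)
  also have "\<dots> = z"
    using outside_conj_inverts[OF g z(1)] outside_conj_inverts[OF s z_carrier(2)] z_carrier by simp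
  finally have "z \<otimes> z = \<one>"
    using r_inv[OF z_carrier(1)] by simp
  with z show False
    by blast
qed

lemma order_eq_twice_card_if_outside_mult_mem:
  assumes fin: "finite (carrier G)" and s: "s \<in> carrier G" "s \<notin> A"
    and outside_mult: "\<And>g. g \<in> carrier G \<Longrightarrow> g \<notin> A \<Longrightarrow> s \<otimes> g \<in> A"
  shows "order G = 2 * card A"
proof -
  have A_carrier: "A \<subseteq> carrier G"
    using subgroup.subset[OF A] .
  have "bij_betw (\<lambda>c. s \<otimes> c) A (carrier G - A)"
  proof (rule bij_betw_imageI)
    show "inj_on (\<lambda>c. s \<otimes> c) A"
      using s A_carrier l_cancel by (intro inj_onI) blast
    show "(\<lambda>c. s \<otimes> c) ` A = carrier G - A"
    proof
      show "(\<lambda>c. s \<otimes> c) ` A \<subseteq> carrier G - A"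
        using mult_subgroup_outside(1)[OF A s] s A_carrier by auto
      show "carrier G - A \<subseteq> (\<lambda>c. s \<otimes> c) ` A"
      proof
        fix g assume g: "g \<in> carrier G - A"
        then have "g = s \<otimes> (s \<otimes> g)"
          using outside_involution s by (simp flip: m_assoc)
        with g outside_mult show "g \<in> (\<lambda>c. s \<otimes> c) ` A"
          by blast
      qed
    qed
  qed
  then have "card (carrier G - A) = card A"
    by (simp add: bij_betw_same_card)
  then show ?thesis
    using card_Diff_subset[OF finite_subset[OF A_carrier fin] A_carrier] card_mono[OF fin A_carrier]
    unfolding order_def by linarith
qed

end

lemma is_dihedral_if_outside_involutions:
  assumes fin: "finite (carrier G)" and z: "z \<in> carrier G" "z [^] (2::nat) \<noteq> \<one>"
    and outside_involution: "\<And>t. t \<in> carrier G \<Longrightarrow> t \<notin> generate G {z} \<Longrightarrow> t [^] (2::nat) = \<one>"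
    and s: "s \<in> carrier G" "s \<notin> generate G {z}"
  shows "is_dihedral G (ord z)"
proof -
  let ?A = "generate G {z}"
  have A: "subgroup ?A G"
    using z by (auto intro: generate_is_subgroup)
  have tt: "t \<otimes> t = \<one>" if "t \<in> carrier G" "t \<notin> ?A" for t
    using outside_involution[OF that] that by (simp add: nat_pow_two)
  have z_in: "z \<in> ?A"
    by (auto intro: generate.incl)
  have outside_mult: "s \<otimes> g \<in> ?A" if "g \<in> carrier G" "g \<notin> ?A" for g
    using outside_mult_mem[OF A tt z_in _ s that] z by (simp add: nat_pow_two)
  have "generate G {z, s} = carrier G"
  proof
    show "generate G {z, s} \<subseteq> carrier G"
      using z s generate_incl by simp
    have A_gen: "?A \<subseteq> generate G {z, s}"
      by (rule mono_generate) auto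
    show "carrier G \<subseteq> generate G {z, s}"
    proof
      fix g assume g: "g \<in> carrier G"
      show "g \<in> generate G {z, s}"
      proof (cases "g \<in> ?A")
        case False
        have "s \<in> generate G {z, s}"
          by (auto intro: generate.incl)
        then have "s \<otimes> (s \<otimes> g) \<in> generate G {z, s}"
          using outside_mult[OF g False] A_gen by (blast intro: generate.eng)
        moreover have "s \<otimes> (s \<otimes> g) = g"
          using tt[OF s] s g by (simp flip: m_assoc)
        ultimately show ?thesis
          by simp
      qed (use A_gen in blast)
    qed
  qed
  moreover have "(z \<otimes> s) [^] (2::nat) = \<one>"
    using outside_involution mult_subgroup_outside(2)[OF A s z_in] z s by simp
  moreover have "order G = 2 * ord z"
    using order_eq_twice_card_if_outside_mult_mem[OF A tt fin s outside_mult] generate_pow_card[OF z(1)]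
    by simp
  moreover have "z [^] ord z = \<one>" "s [^] (2::nat) = \<one>"
    using z s outside_involution by auto
  ultimately show ?thesis
    unfolding is_dihedral_def using z s by blast
qed

lemma power_comparable_imp_in_threshold_family:
  assumes fin: "finite (carrier G)" and comparable: "power_comparable G"
  shows "in_threshold_family G"
proof (cases "\<forall>x\<in>carrier G. x [^] (2::nat) = \<one>")
  case True
  then have "elementary_abelian_2_group G"
    unfolding elementary_abelian_2_group_def using comm_group_if_exponent_two by blast
  then show ?thesis
    unfolding in_threshold_family_def by blast
next
  case False
  then obtain z where z: "z \<in> carrier G" "z [^] (2::nat) \<noteq> \<one>"
    and non_involutions: "\<forall>x\<in>carrier G. x [^] (2::nat) \<noteq> \<one> \<longrightarrow> x \<in> generate G {z}"
    using power_comparable_obtain_maximal[OF fin comparable] by blast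
  have "2 < ord z"
    using ord_gt_2_iff[OF fin] z by blast
  moreover have "(\<exists>q n. Factorial_Ring.prime q \<and> ord z = q ^ n) \<or>
      (\<exists>p. Factorial_Ring.prime p \<and> odd p \<and> ord z = 2 * p)"
    using large_divisors_chain_cases power_comparable_imp_large_divisors_chain_ord[OF fin comparable z(1)]
      ord_ge_1[OF fin z(1)] by simp
  moreover have "cyclic_group G \<and> order G = ord z \<or> is_dihedral G (ord z)"
  proof (cases "generate G {z} = carrier G")
    case True
    then have "carrier G = range (\<lambda>n::int. z [^] n)"
      using generate_pow[OF z(1)] by (simp add: full_SetCompr_eq)
    then have "cyclic_group G"
      using cyclic_group z(1) by blast
    moreover have "order G = ord z"
      using True generate_pow_card[OF z(1)] unfolding order_def by simp
    ultimately show ?thesis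
      by blast
  next
    case False
    then obtain s where "s \<in> carrier G" "s \<notin> generate G {z}"
      using z(1) generate_incl by blast
    then show ?thesis
      using is_dihedral_if_outside_involutions[OF fin z] non_involutions by blast
  qed
  ultimately show ?thesis
    using in_threshold_family_if_cyclic_or_dihedral by blast
qed

end

theorem mainTheorem13:
  fixes G (structure)
  assumes "group G" and "finite (carrier G)"
  shows "(threshold_graph (carrier G) (power_adj G) \<longleftrightarrow> split_graph (carrier G) (power_adj G))
       \<and> (split_graph (carrier G) (power_adj G) \<longleftrightarrow> \<not> has_induced_2K2 (carrier G) (power_adj G))
       \<and> (\<not> has_induced_2K2 (carrier G) (power_adj G) \<longleftrightarrow> intersection_condition G)
       \<and> (intersection_condition G \<longleftrightarrow> in_threshold_family G)"
proof -
  interpret group G by (rule assms(1))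
  have split: "split_graph (carrier G) (power_adj G) \<longleftrightarrow> power_comparable G"
    using power_comparable_imp_split_graph not_power_comparable_imp_induced_2K2
      split_graph_no_induced_2K2 by blast
  have no_2K2: "\<not> has_induced_2K2 (carrier G) (power_adj G) \<longleftrightarrow> power_comparable G"
    using not_power_comparable_imp_induced_2K2 split split_graph_no_induced_2K2 by blast
  have threshold: "threshold_graph (carrier G) (power_adj G) \<longleftrightarrow> power_comparable G"
    unfolding threshold_graph_def
    using power_comparable_imp_no_induced_P4 split split_graph_no_induced_C4 no_2K2 by blast
  have family: "in_threshold_family G \<longleftrightarrow> power_comparable G"
    using in_threshold_family_imp_power_comparable power_comparable_imp_in_threshold_family assms(2)
    by blast
  show ?thesis
    using split no_2K2 threshold family power_comparable_iff_intersection_condition[OF assms(2)]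
    by blast
qed

end
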